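(* Let $r,n\geq1$ and let $\mathcal{P}^{\subset}_{r,n}$ be the set of nested $r$-partitions of $n$. Define $$\phi_0:\mathcal{P}^{\subset}_{r,n}\to(\mathbb{Z}^2)^{\times n}/\mathcal{S}_n,\qquad \phi_0(\mu)=\big[(i(s)-a,\ j(s)-a)\big]_{1\leq a\leq r,\ s\in\mu_a},$$ the unordered $n$-tuple (multiset) of these points. Then $\phi_0$ is injective.
   Context: A partition $\nu=(\nu^1\geq\cdots\geq\nu^l)$ is identified with the set of integral points $\{(i,j)\in\mathbb{Z}^2: 1\leq i\leq l,\ 1\leq j\leq\nu^i\}$. For a box $s=(i,j)$ write $i(s)=i$ and $j(s)=j$. An $r$-partition of $n$ is a tuple $\mu=(\mu_1,\dots,\mu_r)$ of partitions with $\sum_a|\mu_a|=n$. It is nested if $\mu_r\subseteq\mu_{r-1}\subseteq\cdots\subseteq\mu_1$ as subsets of $\mathbb{Z}^2$. The symmetric group $\mathcal{S}_n$ acts on $(\mathbb{Z}^2)^{\times n}$ by permuting the factors. *)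

theory Defs
  imports Main "HOL-Library.Multiset"
begin

definition is_partition :: "nat list \<Rightarrow> bool" where
  "is_partition nu \<longleftrightarrow> sorted_wrt (\<ge>) nu \<and> (\<forall>x\<in>set nu. 0 < x)"

definition boxes :: "nat list \<Rightarrow> (int \<times> int) set" where
  "boxes nu = {(i, j). 1 \<le> i \<and> i \<le> int (length nu) \<and> 1 \<le> j \<and> j \<le> int (nu ! nat (i - 1))}"

definition psize :: "nat list \<Rightarrow> nat" where
  "psize nu = sum_list nu"

text \<open>An r-partition of n: a list (mu_1,...,mu_r) of r partitions with total size n;
 mu ! (a-1) is mu_a.\<close>
definition is_rpartition :: "nat \<Rightarrow> nat \<Rightarrow> nat list list \<Rightarrow> bool" where
  "is_rpartition r n mu \<longleftrightarrow> length mu = r \<and> (\<forall>p\<in>set mu. is_partition p)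
     \<and> (\<Sum>p\<leftarrow>mu. psize p) = n"

definition nested :: "nat list list \<Rightarrow> bool" where
  "nested mu \<longleftrightarrow> (\<forall>a. Suc a < length mu \<longrightarrow> boxes (mu ! Suc a) \<subseteq> boxes (mu ! a))"

definition nested_rpartitions :: "nat \<Rightarrow> nat \<Rightarrow> nat list list set" where
  "nested_rpartitions r n = {mu. is_rpartition r n mu \<and> nested mu}"

definition phi0 :: "nat list list \<Rightarrow> (int \<times> int) multiset" where
  "phi0 mu = (\<Sum>a\<in>{1..length mu}.
      image_mset (\<lambda>(i, j). (i - int a, j - int a)) (mset_set (boxes (mu ! (a - 1)))))"

end

theory Submission
  imports Defs
begin

text \<open>For a point \<open>p\<close>, the levels \<open>a\<close> with \<open>p + (a, a) \<in> \<mu>\<^sub>a\<close> form an interval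
  starting at the least \<open>a \<ge> 1\<close> for which \<open>p + (a, a)\<close> has positive coordinates: a Young
  diagram is closed under moving down the diagonal, and nestedness carries this from
  \<open>\<mu>\<^sub>b\<close> to \<open>\<mu>\<^sub>c\<close> for \<open>c \<le> b\<close>. The start of the interval depends only on \<open>p\<close> and its
  length is the multiplicity of \<open>p\<close> in \<open>\<phi>\<^sub>0(\<mu>)\<close>, so \<open>\<phi>\<^sub>0(\<mu>)\<close> determines every \<open>\<mu>\<^sub>a\<close>.\<close>

lemma finite_boxes: "finite (boxes p)"
proof (rule finite_subset)
  show "boxes p \<subseteq> {1..int (length p)} \<times> {1..int (sum_list p)}"
  proof (rule subrelI)
    fix i j assume "(i, j) \<in> boxes p"
    then have "1 \<le> i" "i \<le> int (length p)" "1 \<le> j" "j \<le> int (p ! nat (i - 1))"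
      by (auto simp: boxes_def)
    moreover have "p ! nat (i - 1) \<le> sum_list p"
      using calculation by (intro elem_le_sum_list) auto
    ultimately show "(i, j) \<in> {1..int (length p)} \<times> {1..int (sum_list p)}"
      by auto
  qed
qed simp

lemma boxes_lower_closed:
  assumes "is_partition p" "(i, j) \<in> boxes p" "1 \<le> i'" "i' \<le> i" "1 \<le> j'" "j' \<le> j"
  shows "(i', j') \<in> boxes p"
proof -
  have box: "1 \<le> i" "i \<le> int (length p)" "j \<le> int (p ! nat (i - 1))"
    using assms(2) by (auto simp: boxes_def)
  have "p ! nat (i - 1) \<le> p ! nat (i' - 1)"
  proof (cases "i' = i")
    case False
    then have "nat (i' - 1) < nat (i - 1)" "nat (i - 1) < length p"
      using assms box by auto
    then show ?thesis
      using assms(1) by (auto simp: is_partition_def sorted_wrt_iff_nth_less)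
  qed simp
  then show ?thesis
    using box assms by (auto simp: boxes_def)
qed

lemma boxes_inject:
  assumes "is_partition p" "is_partition q"
  shows "boxes p = boxes q \<longleftrightarrow> p = q"
proof
  have first_column: "(int k + 1, 1) \<in> boxes p \<longleftrightarrow> k < length p"
    if "is_partition p" for p k
    using that nth_mem[of k p] by (auto simp: boxes_def is_partition_def Suc_le_eq)
  have row: "(int k + 1, int j) \<in> boxes p \<longleftrightarrow> 1 \<le> j \<and> j \<le> p ! k"
    if "k < length p" for p k j
    using that by (auto simp: boxes_def)
  assume eq: "boxes p = boxes q"
  show "p = q"
  proof (rule nth_equalityI)
    show len: "length p = length q"
      using first_column[OF assms(1)] first_column[OF assms(2)] eq
      by (metis linorder_neqE_nat less_irrefl)
    fix k assume k: "k < length p"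
    have "1 \<le> j \<and> j \<le> p ! k \<longleftrightarrow> 1 \<le> j \<and> j \<le> q ! k" for j
      using row[OF k] row[of k q] k len eq by metis
    moreover have "0 < p ! k" "0 < q ! k"
      using assms k len by (auto simp: is_partition_def)
    ultimately show "p ! k = q ! k"
      by (metis One_nat_def Suc_leI le_antisym order_refl)
  qed
qed simp

lemma nested_boxes_antimono:
  assumes "nested mu" "c \<le> b" "b < length mu"
  shows "boxes (mu ! b) \<subseteq> boxes (mu ! c)"
  by (rule lift_Suc_antimono_le_ivl[where N = "{a. Suc a < length mu}"])
     (use assms in \<open>auto simp: nested_def\<close>)

lemma finite_interval_closed_eq_atLeastLessThan:
  fixes A :: "nat set"
  assumes "finite A" "\<forall>b\<in>A. a \<le> b" "\<forall>b\<in>A. {a..b} \<subseteq> A"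
  shows "A = {a..<a + card A}"
proof (cases "A = {}")
  case False
  define m where "m = Max A"
  then have "m \<in> A"
    using False assms(1) by simp
  then have "A = {a..m}" "a \<le> m"
    using assms by (auto simp: m_def)
  then show ?thesis
    by (simp add: atLeastLessThanSuc_atLeastAtMost[symmetric])
qed simp

definition levels :: "nat list list \<Rightarrow> int \<times> int \<Rightarrow> nat set" where
  "levels mu p = {a \<in> {1..length mu}. (fst p + int a, snd p + int a) \<in> boxes (mu ! (a - 1))}"

definition first_level :: "int \<times> int \<Rightarrow> nat" where
  "first_level p = nat (max 1 (max (1 - fst p) (1 - snd p)))"

lemma first_level_le_iff:
  "first_level p \<le> a \<longleftrightarrow> 1 \<le> a \<and> 1 \<le> fst p + int a \<and> 1 \<le> snd p + int a"
  unfolding first_level_def by linarith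

lemma count_phi0: "count (phi0 mu) p = card (levels mu p)"
proof -
  have count_level: "count (image_mset (\<lambda>(i, j). (i - int a, j - int a)) (mset_set (boxes q))) p =
      (if (fst p + int a, snd p + int a) \<in> boxes q then 1 else 0)" for a q
  proof -
    let ?shift = "\<lambda>(i, j). (i - int a, j - int a)"
    have "inj_on ?shift (boxes q)"
      by (auto simp: inj_on_def)
    then have "image_mset ?shift (mset_set (boxes q)) = mset_set (?shift ` boxes q)"
      by (simp add: image_mset_mset_set)
    moreover have "p \<in> ?shift ` boxes q \<longleftrightarrow> (fst p + int a, snd p + int a) \<in> boxes q"
      by (cases p) (force simp: image_iff)
    ultimately show ?thesis
      using finite_boxes by (simp add: count_mset_set')
  qed
  show ?thesis
    by (simp add: phi0_def count_sum count_level sum.If_cases levels_def Int_def)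
qed

lemma levels_eq_atLeastLessThan:
  assumes "\<forall>q\<in>set mu. is_partition q" "nested mu"
  shows "levels mu p = {first_level p..<first_level p + card (levels mu p)}"
proof (rule finite_interval_closed_eq_atLeastLessThan)
  show "finite (levels mu p)"
    by (simp add: levels_def)
  show "\<forall>b\<in>levels mu p. first_level p \<le> b"
    by (auto simp: levels_def first_level_le_iff boxes_def)
  show "\<forall>b\<in>levels mu p. {first_level p..b} \<subseteq> levels mu p"
  proof (intro ballI subsetI)
    fix b c assume b: "b \<in> levels mu p" and c: "c \<in> {first_level p..b}"
    then have range: "1 \<le> c" "c \<le> b" "b \<le> length mu"
      and box_b: "(fst p + int b, snd p + int b) \<in> boxes (mu ! (b - 1))"
      by (auto simp: levels_def first_level_le_iff)
    have "(fst p + int c, snd p + int c) \<in> boxes (mu ! (c - 1))"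
    proof (rule boxes_lower_closed)
      show "is_partition (mu ! (c - 1))"
        using assms(1) range by auto
      have "boxes (mu ! (b - 1)) \<subseteq> boxes (mu ! (c - 1))"
        using range by (intro nested_boxes_antimono[OF assms(2)]) auto
      then show "(fst p + int b, snd p + int b) \<in> boxes (mu ! (c - 1))"
        using box_b by blast
    qed (use c range in \<open>auto simp: first_level_le_iff\<close>)
    then show "c \<in> levels mu p"
      using range by (auto simp: levels_def)
  qed
qed

lemma mem_boxes_iff_levels:
  assumes "k < length mu"
  shows "(x, y) \<in> boxes (mu ! k) \<longleftrightarrow> Suc k \<in> levels mu (x - int (Suc k), y - int (Suc k))"
  using assms by (auto simp: levels_def)

theorem lemma6p6:
  fixes r n :: nat
  assumes "1 \<le> r" and "1 \<le> n"
  shows "inj_on phi0 (nested_rpartitions r n)"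
proof (rule inj_onI)
  fix mu mu' assume "mu \<in> nested_rpartitions r n" "mu' \<in> nested_rpartitions r n"
    and phi0_eq: "phi0 mu = phi0 mu'"
  then have parts: "\<forall>q\<in>set mu. is_partition q" "\<forall>q\<in>set mu'. is_partition q"
    and nested: "nested mu" "nested mu'" and len: "length mu = length mu'"
    by (auto simp: nested_rpartitions_def is_rpartition_def)
  have levels_eq: "levels mu p = levels mu' p" for p
    using levels_eq_atLeastLessThan[OF parts(1) nested(1), of p]
      levels_eq_atLeastLessThan[OF parts(2) nested(2), of p]
    by (metis count_phi0 phi0_eq)
  show "mu = mu'"
  proof (rule nth_equalityI[OF len])
    fix k assume k: "k < length mu"
    then have "boxes (mu ! k) = boxes (mu' ! k)"
      using len levels_eq by (auto simp: mem_boxes_iff_levels)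
    then show "mu ! k = mu' ! k"
      using boxes_inject parts k len by (metis nth_mem)
  qed
qed

end
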